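(* Let $\mathfrak{D}=[a,b]=\prod_{i=1}^d [a_i,b_i]\subseteq\mathbb{R}^d$ with $a_i<b_i$, and let $n_0\ge 1$ and $t\ge 1$ be integers. Consider a stochastic algorithm which, at each iteration $n\ge n_0$, generates random candidate points $Y_{n,1},\dots,Y_{n,t}\in\mathfrak{D}$ as follows. Let $\mathcal{E}_{n-1}$ denote the collection of all random vectors generated before iteration $n$, and $\sigma(\mathcal{E}_{n-1})$ the $\sigma$-field they generate; the current best point $x_n^*\in\mathfrak{D}$ is $\sigma(\mathcal{E}_{n-1})$-measurable. For each $j=1,\dots,t$ and each coordinate $i=1,\dots,d$, conditionally on $\sigma(\mathcal{E}_{n-1})$ and independently over $i$: with probability $P_{n,i}$ the coordinate is perturbed, i.e. $\tilde Y_{n,j,i}=x^*_{n,i}+Z_{n,j,i}$, where $Z_{n,j,i}$ has a continuous (conditional) probability density $F_{n,j,i}$ on $\mathbb{R}$; otherwise $\tilde Y_{n,j,i}=x^*_{n,i}$. If $\tilde Y_{n,j}\notin\mathfrak{D}$ it is replaced by a point of $\mathfrak{D}$ (e.g. the nearest point in $\mathfrak{D}$), and $Y_{n,j}$ is the resulting point; if $\tilde Y_{n,j}\in\mathfrak{D}$ then $Y_{n,j}=\tilde Y_{n,j}$. Here $P_{n,i}$ and $F_{n,j,i}$ may depend on $\sigma(\mathcal{E}_{n-1})$. Suppose there exist constants $C_1>0$ and $C_2>0$ such that for every $n\ge n_0$, every $1\le i\le d$ and every $j=1,\dots,t$, we have $P_{n,i}>C_1$ and $F_{n,j,i}(z)>C_2$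 for all $z\in[-(b_i-a_i),\,b_i-a_i]$. Then the following condition holds: for every $j=1,\dots,t$, every $x\in\mathfrak{D}$ and every $\delta>0$ there exists $\nu_j(x,\delta)>0$ such that $$P\big[Y_{n,j}\in B(x,\delta)\cap\mathfrak{D}\ \big|\ \sigma(\mathcal{E}_{n-1})\big]\ge \nu_j(x,\delta)\quad\text{almost surely, for all } n\ge n_0,$$ where $B(x,\delta)$ is the open Euclidean ball of radius $\delta$ centered at $x$.
   Context: This is the candidate-point generation step of a stochastic response-surface global optimization method on the box $\mathfrak{D}$; the candidate points are perturbations of the current best point $x_n^*$ in a random subset of coordinates. The conclusion is the condition (called Condition [2] in the paper) under which such methods converge to the global minimum almost surely. *)

theory Defs
  imports "HOL-Analysis.Analysis" "HOL-Probability.Probability"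
begin

definition cond_prob_given :: "'a measure \<Rightarrow> 'a measure \<Rightarrow> 'a set \<Rightarrow> 'a \<Rightarrow> real" where
  "cond_prob_given M F A = real_cond_exp M F (indicator A)"

end

theory Submission imports Defs begin

text \<open>Around any point of the box there is a sub-box of positive volume inside the ball.  Under
  the conditional law of the candidate, each coordinate lands in the corresponding side of this
  sub-box with probability at least \<open>C1 * C2 * (side length)\<close>: it is perturbed with probability
  \<open>> C1\<close>, and every shift leading from a point of the box into the side lies in
  \<open>[-(b\<^sub>i - a\<^sub>i), b\<^sub>i - a\<^sub>i]\<close>, where the density exceeds \<open>C2\<close>.  The product of these bounds
  depends neither on the iteration nor on \<open>\<omega>\<close>, and since a candidate in the sub-box is not
  repaired, monotonicity of conditional expectation transfers it to the ball event.\<close>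

lemma cond_prob_given_mono:
  assumes "finite_measure M" "subalgebra M F"
    and "A \<subseteq> B" "A \<in> sets M" "B \<in> sets M"
  shows "AE \<omega> in M. cond_prob_given M F A \<omega> \<le> cond_prob_given M F B \<omega>"
proof -
  interpret finite_measure_subalgebra M F
    using assms(1,2) by (rule finite_measure_subalgebra.intro[OF _ finite_measure_subalgebra_axioms.intro])
  show ?thesis
    unfolding cond_prob_given_def
  proof (rule real_cond_exp_mono)
    show "AE \<omega> in M. indicat_real A \<omega> \<le> indicat_real B \<omega>"
      using \<open>A \<subseteq> B\<close> by (intro AE_I2) (auto simp: indicator_def)
    show "integrable M (indicat_real A)" "integrable M (indicat_real B)"
      using assms(4,5) by (simp_all add: emeasure_finite less_top[symmetric])
  qed
qed

lemma cond_prob_given_ge_if_subset: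
  assumes "finite_measure M" "subalgebra M F"
    and "A \<subseteq> B" "A \<in> sets M" "B \<in> sets M"
    and "AE \<omega> in M. cond_prob_given M F A \<omega> = g \<omega>" and ge: "\<forall>\<omega>\<in>space M. \<nu> \<le> g \<omega>"
  shows "AE \<omega> in M. \<nu> \<le> cond_prob_given M F B \<omega>"
  using cond_prob_given_mono[OF assms(1-5)] assms(6) AE_space
proof eventually_elim
  case (elim \<omega>)
  then show ?case
    using ge by fastforce
qed

lemma mem_ball_if_coordinates_close:
  fixes x y :: "real ^ 'n"
  assumes "\<delta> > 0" and close: "\<And>i. \<bar>x $ i - y $ i\<bar> \<le> \<delta> / (2 * real CARD('n))"
  shows "y \<in> ball x \<delta>"
proof -
  have "dist x y \<le> (\<Sum>i\<in>UNIV. \<bar>(x - y) $ i\<bar>)"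
    unfolding dist_norm by (rule norm_le_l1_cart)
  also have "\<dots> \<le> (\<Sum>i\<in>(UNIV::'n set). \<delta> / (2 * real CARD('n)))"
    by (rule sum_mono) (simp add: close)
  also have "\<dots> = \<delta> / 2"
    by simp
  also have "\<dots> < \<delta>"
    using \<open>\<delta> > 0\<close> by simp
  finally show ?thesis
    by (simp add: dist_commute)
qed

lemma cbox_inside_ball_inter_cbox:
  fixes a b x :: "real ^ 'n"
  assumes "\<And>i. a $ i < b $ i" "x \<in> cbox a b" "\<delta> > 0"
  obtains lo hi where "\<And>i. a $ i \<le> lo $ i" "\<And>i. lo $ i < hi $ i" "\<And>i. hi $ i \<le> b $ i"
    and "cbox lo hi \<subseteq> ball x \<delta>"
proof
  define e where "e = \<delta> / (2 * real CARD('n))"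
  have "e > 0" using \<open>\<delta> > 0\<close> by (simp add: e_def)
  define lo where "lo = (\<chi> i. max (a $ i) (x $ i - e))"
  define hi where "hi = (\<chi> i. min (b $ i) (x $ i + e))"
  show "a $ i \<le> lo $ i" "hi $ i \<le> b $ i" for i
    by (simp_all add: lo_def hi_def)
  show "lo $ i < hi $ i" for i
  proof -
    have "a $ i \<le> x $ i" "x $ i \<le> b $ i"
      using \<open>x \<in> cbox a b\<close> by (simp_all add: mem_box_cart)
    then show ?thesis
      using assms(1)[of i] \<open>e > 0\<close> by (simp add: lo_def hi_def)
  qed
  show "cbox lo hi \<subseteq> ball x \<delta>"
  proof
    fix y assume "y \<in> cbox lo hi"
    then have y: "lo $ i \<le> y $ i \<and> y $ i \<le> hi $ i" for i
      by (simp add: mem_box_cart)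
    have "\<bar>x $ i - y $ i\<bar> \<le> e" for i
      using y[of i] by (simp add: lo_def hi_def abs_le_iff)
    with \<open>\<delta> > 0\<close> show "y \<in> ball x \<delta>"
      unfolding e_def by (rule mem_ball_if_coordinates_close)
  qed
qed

lemma integral_shifted_interval_ge:
  fixes g :: "real \<Rightarrow> real"
  assumes "integrable lborel g" "lo \<le> hi" and ge: "\<forall>z\<in>{lo - c..hi - c}. C \<le> g z"
  shows "C * (hi - lo) \<le> (LINT z|lborel. indicator {lo..hi} (c + z) * g z)"
proof -
  have shift: "(\<lambda>z. indicator {lo..hi} (c + z) * g z) = (\<lambda>z. indicator {lo - c..hi - c} z * g z)"
    by (auto simp: indicator_def fun_eq_iff)
  have "C * (hi - lo) = (LINT z|lborel. indicator {lo - c..hi - c} z * C)"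
    using \<open>lo \<le> hi\<close> by simp
  also have "\<dots> \<le> (LINT z|lborel. indicator {lo - c..hi - c} z * g z)"
  proof (rule integral_mono)
    show "integrable lborel (\<lambda>z. indicator {lo - c..hi - c} z * C)"
      by (simp add: integrable_real_mult_indicator emeasure_lborel_Icc_eq)
    show "integrable lborel (\<lambda>z. indicator {lo - c..hi - c} z * g z)"
      using integrable_mult_indicator[OF _ assms(1), of "{lo - c..hi - c}"] by simp
  qed (use ge in \<open>auto simp: indicator_def\<close>)
  finally show ?thesis unfolding shift .
qed

lemma perturbed_coordinate_prob_ge:
  fixes p C1 C2 lo hi c :: real
  assumes "C1 < p" "p \<le> 1" "0 < C1" "0 < C2" "lo \<le> hi"
    and "integrable lborel g" "\<forall>z\<in>{lo - c..hi - c}. C2 \<le> g z"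
  shows "C1 * C2 * (hi - lo) \<le>
    (1 - p) * indicator {lo..hi} c + p * (LINT z|lborel. indicator {lo..hi} (c + z) * g z)"
proof -
  have "C1 * (C2 * (hi - lo)) \<le> p * (LINT z|lborel. indicator {lo..hi} (c + z) * g z)"
    using assms integral_shifted_interval_ge[of g lo hi c C2] by (intro mult_mono) auto
  moreover have "0 \<le> (1 - p) * indicator {lo..hi} c"
    using \<open>p \<le> 1\<close> by simp
  ultimately show ?thesis by (simp add: mult.assoc)
qed

lemma prod_perturbed_coordinates_prob_ge:
  fixes a b lo hi c :: "real ^ 'n"
  assumes "\<And>i. a $ i \<le> lo $ i" "\<And>i. lo $ i < hi $ i" "\<And>i. hi $ i \<le> b $ i" "c \<in> cbox a b"
    and "0 < C1" "0 < C2" "\<And>i. C1 < p i" "\<And>i. p i \<le> 1" "\<And>i. integrable lborel (g i)"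
    and g_ge: "\<And>i. \<forall>z\<in>{-(b $ i - a $ i)..b $ i - a $ i}. C2 < g i z"
  shows "(\<Prod>i\<in>UNIV. C1 * C2 * (hi $ i - lo $ i)) \<le>
    (\<Prod>i\<in>UNIV. (1 - p i) * indicator {lo $ i..hi $ i} (c $ i)
      + p i * (LINT z|lborel. indicator {lo $ i..hi $ i} (c $ i + z) * g i z))"
proof (intro prod_mono conjI)
  fix i
  have "a $ i \<le> c $ i" "c $ i \<le> b $ i"
    using \<open>c \<in> cbox a b\<close> by (simp_all add: mem_box_cart)
  then have "{lo $ i - c $ i..hi $ i - c $ i} \<subseteq> {-(b $ i - a $ i)..b $ i - a $ i}"
    using assms(1,3)[of i] by auto
  then have "\<forall>z\<in>{lo $ i - c $ i..hi $ i - c $ i}. C2 \<le> g i z"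
    using g_ge[of i] by (meson less_imp_le subsetD)
  then show "C1 * C2 * (hi $ i - lo $ i) \<le> (1 - p i) * indicator {lo $ i..hi $ i} (c $ i)
      + p i * (LINT z|lborel. indicator {lo $ i..hi $ i} (c $ i + z) * g i z)"
    using assms(5,6) assms(2,7-9)[of i] by (intro perturbed_coordinate_prob_ge) (auto intro: less_imp_le)
  show "0 \<le> C1 * C2 * (hi $ i - lo $ i)"
    using assms(5,6) assms(2)[of i] by simp
qed

theorem proposition1:
  fixes M :: "'w measure"
    and F :: "nat \<Rightarrow> 'w measure"
    and a b :: "real ^ 'd"
    and n0 t :: nat
    and xs :: "nat \<Rightarrow> 'w \<Rightarrow> real ^ 'd"
    and p :: "nat \<Rightarrow> 'd \<Rightarrow> 'w \<Rightarrow> real"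
    and f :: "nat \<Rightarrow> nat \<Rightarrow> 'd \<Rightarrow> 'w \<Rightarrow> real \<Rightarrow> real"
    and Yt Y :: "nat \<Rightarrow> nat \<Rightarrow> 'w \<Rightarrow> real ^ 'd"
  assumes prob: "prob_space M"
    and ab: "\<forall>i. a $ i < b $ i"
    and n0: "n0 \<ge> 1" and t: "t \<ge> 1"
    and subalg: "\<forall>n\<ge>n0. subalgebra M (F n)"
    and xs_meas: "\<forall>n\<ge>n0. xs n \<in> borel_measurable (F n)"
    and xs_in: "\<forall>n\<ge>n0. \<forall>\<omega>\<in>space M. xs n \<omega> \<in> cbox a b"
    and p_meas: "\<forall>n\<ge>n0. \<forall>i. p n i \<in> borel_measurable (F n)"
    and p_prob: "\<forall>n\<ge>n0. \<forall>i. \<forall>\<omega>\<in>space M. 0 \<le> p n i \<omega> \<and> p n i \<omega> \<le> 1"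
    and f_dens: "\<forall>n\<ge>n0. \<forall>j\<in>{1..t}. \<forall>i. \<forall>\<omega>\<in>space M.
        continuous_on UNIV (f n j i \<omega>) \<and> (\<forall>z. 0 \<le> f n j i \<omega> z) \<and>
        integrable lborel (f n j i \<omega>) \<and> (LINT z|lborel. f n j i \<omega> z) = 1"
    and Yt_meas: "\<forall>n\<ge>n0. \<forall>j\<in>{1..t}. Yt n j \<in> borel_measurable M"
    and Y_meas: "\<forall>n\<ge>n0. \<forall>j\<in>{1..t}. Y n j \<in> borel_measurable M"
    and Yt_law: "\<forall>n\<ge>n0. \<forall>j\<in>{1..t}. \<forall>A :: 'd \<Rightarrow> real set. (\<forall>i. A i \<in> sets borel) \<longrightarrow>
        (AE \<omega> in M. cond_prob_given M (F n) {\<eta>\<in>space M. \<forall>i. Yt n j \<eta> $ i \<in> A i} \<omega> =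
           (\<Prod>i\<in>UNIV. (1 - p n i \<omega>) * indicator (A i) (xs n \<omega> $ i)
              + p n i \<omega> * (LINT z|lborel. indicator (A i) (xs n \<omega> $ i + z) * f n j i \<omega> z)))"
    and Y_repair: "\<forall>n\<ge>n0. \<forall>j\<in>{1..t}. \<forall>\<omega>\<in>space M.
        Y n j \<omega> \<in> cbox a b \<and> (Yt n j \<omega> \<in> cbox a b \<longrightarrow> Y n j \<omega> = Yt n j \<omega>)"
    and bounds: "\<exists>C1>0. \<exists>C2>0. \<forall>n\<ge>n0. \<forall>i. \<forall>j\<in>{1..t}. \<forall>\<omega>\<in>space M.
        p n i \<omega> > C1 \<and> (\<forall>z\<in>{-(b $ i - a $ i)..b $ i - a $ i}. f n j i \<omega> z > C2)"
  shows "\<forall>j\<in>{1..t}. \<forall>x\<in>cbox a b. \<forall>\<delta>>0. \<exists>\<nu>>0. \<forall>n\<ge>n0.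
           AE \<omega> in M. cond_prob_given M (F n) {\<eta>\<in>space M. Y n j \<eta> \<in> ball x \<delta> \<inter> cbox a b} \<omega> \<ge> \<nu>"
proof (intro ballI allI impI)
  fix j x and \<delta> :: real
  assume j: "j \<in> {1..t}" and x: "x \<in> cbox a b" and "\<delta> > 0"
  obtain C1 C2 where "C1 > 0" "C2 > 0" and CB: "\<forall>n\<ge>n0. \<forall>i. \<forall>j\<in>{1..t}. \<forall>\<omega>\<in>space M.
        p n i \<omega> > C1 \<and> (\<forall>z\<in>{-(b $ i - a $ i)..b $ i - a $ i}. f n j i \<omega> z > C2)"
    using bounds by blast
  obtain lo hi where lo: "\<And>i. a $ i \<le> lo $ i" and lohi: "\<And>i. lo $ i < hi $ i"
    and hi: "\<And>i. hi $ i \<le> b $ i" and sub_ball: "cbox lo hi \<subseteq> ball x \<delta>"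
    using cbox_inside_ball_inter_cbox[of a b x \<delta>] ab x \<open>\<delta> > 0\<close> by blast
  define \<nu> where "\<nu> = (\<Prod>i\<in>UNIV. C1 * C2 * (hi $ i - lo $ i))"
  have "\<nu> > 0"
    unfolding \<nu>_def using \<open>C1 > 0\<close> \<open>C2 > 0\<close> lohi by (intro prod_pos) simp
  moreover have "AE \<omega> in M. \<nu> \<le> cond_prob_given M (F n) {\<eta>\<in>space M. Y n j \<eta> \<in> ball x \<delta> \<inter> cbox a b} \<omega>"
    if n: "n \<ge> n0" for n
  proof (rule cond_prob_given_ge_if_subset[OF prob_space.finite_measure[OF prob] subalg[rule_format, OF n]])
    let ?S = "{\<eta>\<in>space M. \<forall>i. Yt n j \<eta> $ i \<in> {lo $ i..hi $ i}}"
    have S_eq: "?S = Yt n j -` cbox lo hi \<inter> space M"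
      by (auto simp: mem_box_cart)
    have "cbox lo hi \<subseteq> cbox a b"
      using lo hi by (simp add: subset_interval_cart(1))
    then show "?S \<subseteq> {\<eta>\<in>space M. Y n j \<eta> \<in> ball x \<delta> \<inter> cbox a b}"
      using Y_repair n j sub_ball unfolding S_eq by fastforce
    show "?S \<in> sets M"
      unfolding S_eq by (rule measurable_sets[OF Yt_meas[rule_format, OF n j]]) simp
    have "{\<eta>\<in>space M. Y n j \<eta> \<in> ball x \<delta> \<inter> cbox a b} = Y n j -` (ball x \<delta> \<inter> cbox a b) \<inter> space M"
      by auto
    then show "{\<eta>\<in>space M. Y n j \<eta> \<in> ball x \<delta> \<inter> cbox a b} \<in> sets M"
      by (metis measurable_sets[OF Y_meas[rule_format, OF n j]] borel_open open_ball sets.Int borel_closed closed_cbox)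
    show "AE \<omega> in M. cond_prob_given M (F n) ?S \<omega> =
        (\<Prod>i\<in>UNIV. (1 - p n i \<omega>) * indicator {lo $ i..hi $ i} (xs n \<omega> $ i)
          + p n i \<omega> * (LINT z|lborel. indicator {lo $ i..hi $ i} (xs n \<omega> $ i + z) * f n j i \<omega> z))"
      by (rule Yt_law[rule_format, OF n j]) simp
    show "\<forall>\<omega>\<in>space M. \<nu> \<le> (\<Prod>i\<in>UNIV. (1 - p n i \<omega>) * indicator {lo $ i..hi $ i} (xs n \<omega> $ i)
          + p n i \<omega> * (LINT z|lborel. indicator {lo $ i..hi $ i} (xs n \<omega> $ i + z) * f n j i \<omega> z))"
      unfolding \<nu>_def using CB p_prob f_dens xs_in n j
      by (auto intro!: prod_perturbed_coordinates_prob_ge[OF lo lohi hi _ \<open>C1 > 0\<close> \<open>C2 > 0\<close>])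
  qed
  ultimately show "\<exists>\<nu>>0. \<forall>n\<ge>n0.
      AE \<omega> in M. cond_prob_given M (F n) {\<eta>\<in>space M. Y n j \<eta> \<in> ball x \<delta> \<inter> cbox a b} \<omega> \<ge> \<nu>"
    by blast
qed

end
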